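(* For every positive integer $n$, $$|S_n(123,132,3241)|=|S_n(132,213,2341)|=f_{n+2}-1,$$ where $f_n$ is the $n$-th Fibonacci number ($f_1=f_2=1$, $f_n=f_{n-1}+f_{n-2}$).
   Context: Permutations are written in one-line notation. A permutation $\sigma\in S_n$ contains $\pi\in S_m$ if there are indices $i_1<\dots<i_m$ such that for all $j<l$, $\sigma_{i_j}<\sigma_{i_l}$ iff $\pi_j<\pi_l$; otherwise $\sigma$ avoids $\pi$. $S_n(\pi^{(1)},\dots,\pi^{(r)})$ is the set of permutations in $S_n$ avoiding all the listed patterns. *)

theory Defs
  imports Main "HOL-Number_Theory.Fib"
begin

definition perms :: "nat \<Rightarrow> nat list set" where
  "perms n = {xs. distinct xs \<and> set xs = {1..n}}"

definition contains :: "nat list \<Rightarrow> nat list \<Rightarrow> bool" where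
  "contains sigma pat \<longleftrightarrow>
     (\<exists>idx :: nat \<Rightarrow> nat.
        (\<forall>j l. j < l \<and> l < length pat \<longrightarrow> idx j < idx l) \<and>
        (\<forall>j < length pat. idx j < length sigma) \<and>
        (\<forall>j l. j < l \<and> l < length pat \<longrightarrow>
              (sigma ! idx j < sigma ! idx l \<longleftrightarrow> pat ! j < pat ! l)))"

definition avoids :: "nat list \<Rightarrow> nat list \<Rightarrow> bool" where
  "avoids sigma pat \<longleftrightarrow> \<not> contains sigma pat"

definition Av :: "nat \<Rightarrow> nat list list \<Rightarrow> nat list set" where
  "Av n pats = {sigma \<in> perms n. \<forall>pat \<in> set pats. avoids sigma pat}"

end

theory Submission
  imports Defs "HOL-Library.Sublist"
begin

text \<open>
  For n \<ge> 3 a permutation in either class starts with n, followed by any member of the class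
  of length n - 1, or with n - 1, n, followed by any member of the class of length n - 2; prefixing
  such entries never creates an occurrence, because in every pattern involved the first entry is
  smaller than the third. The only other member of the class is a single exceptional permutation:
  (n-1)(n-2)...1n for {123, 132, 3241} and the identity for {132, 213, 2341}. Hence both counts
  satisfy a(n) = a(n-1) + a(n-2) + 1 with a(1) = 1 and a(2) = 2, that is, a(n) + 1 = f(n+2).
\<close>

lemma contains_length_le:
  assumes "contains s pat"
  shows "length pat \<le> length s"
proof -
  obtain idx where mono: "\<forall>j l. j < l \<and> l < length pat \<longrightarrow> idx j < idx l"
    and bound: "\<forall>j < length pat. idx j < length s"
    using assms unfolding contains_def by blast
  have le: "j \<le> idx j" if "j < length pat" for j
    using that
  proof (induction j)
    case (Suc j)
    then show ?case using mono[rule_format, of j "Suc j"] by simp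
  qed simp
  show ?thesis
  proof (cases "pat = []")
    case False
    then have "length pat - 1 \<le> idx (length pat - 1)" "idx (length pat - 1) < length s"
      using le bound by auto
    then show ?thesis by linarith
  qed simp
qed

lemma contains_Cons:
  assumes "contains s pat"
  shows "contains (x # s) pat"
proof -
  obtain idx where "\<forall>j l. j < l \<and> l < length pat \<longrightarrow> idx j < idx l"
    and "\<forall>j < length pat. idx j < length s"
    and "\<forall>j l. j < l \<and> l < length pat \<longrightarrow> (s ! idx j < s ! idx l \<longleftrightarrow> pat ! j < pat ! l)"
    using assms unfolding contains_def by blast
  then show ?thesis
    unfolding contains_def by (intro exI[of _ "\<lambda>j. Suc (idx j)"]) simp
qed

text \<open>An occurrence through x would have to start at x, but its third entry lies at position 2
  or later, hence below x, contradicting pat ! 0 < pat ! 2.\<close>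

lemma contains_Cons_aboveD:
  assumes "contains (x # u) pat" and "2 < length pat" and "pat ! 0 < pat ! 2"
    and above: "\<forall>z \<in> set (tl u). z < x"
  shows "contains u pat"
proof -
  obtain idx where mono: "\<forall>j l. j < l \<and> l < length pat \<longrightarrow> idx j < idx l"
    and bound: "\<forall>j < length pat. idx j < length (x # u)"
    and iso: "\<forall>j l. j < l \<and> l < length pat \<longrightarrow>
                 ((x # u) ! idx j < (x # u) ! idx l \<longleftrightarrow> pat ! j < pat ! l)"
    using assms(1) unfolding contains_def by blast
  have "idx 0 \<noteq> 0"
  proof
    assume idx0: "idx 0 = 0"
    have "2 \<le> idx 2"
      using mono[rule_format, of 0 1] mono[rule_format, of 1 2] assms(2) by simp
    moreover have "idx 2 < Suc (length u)"
      using bound assms(2) by simp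
    ultimately have "(x # u) ! idx 2 \<in> set (tl u)"
      by (cases u) (auto simp: nth_Cons' nth_tl)
    then show False
      using above iso[rule_format, of 0 2] assms(2,3) idx0 by fastforce
  qed
  have "idx 0 \<le> idx j" if "j < length pat" for j
    using that mono by (cases j) (auto simp: less_imp_le)
  with \<open>idx 0 \<noteq> 0\<close> have pos: "0 < idx j" if "j < length pat" for j
    using that by fastforce
  show ?thesis
    unfolding contains_def
  proof (intro exI[of _ "\<lambda>j. idx j - 1"] conjI allI impI)
    fix j l assume jl: "j < l \<and> l < length pat"
    then have "0 < idx j" "idx j < idx l"
      using pos mono by auto
    with iso[rule_format, OF jl] show "idx j - 1 < idx l - 1"
      and "(u ! (idx j - 1) < u ! (idx l - 1)) = (pat ! j < pat ! l)"
      by (simp_all add: nth_Cons')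
  next
    fix j assume "j < length pat"
    with bound pos show "idx j - 1 < length u" by fastforce
  qed
qed

lemma subseq_embedding:
  assumes "subseq t s"
  shows "\<exists>idx. (\<forall>j l. j < l \<and> l < length t \<longrightarrow> idx j < idx l)
    \<and> (\<forall>j < length t. idx j < length s \<and> s ! idx j = t ! j)"
  using assms
proof (induction rule: list_emb.induct)
  case (list_emb_Nil ys)
  show ?case by simp
next
  case (list_emb_Cons xs ys y)
  then obtain idx where "\<forall>j l. j < l \<and> l < length xs \<longrightarrow> idx j < idx l"
    and "\<forall>j < length xs. idx j < length ys \<and> ys ! idx j = xs ! j"
    by blast
  then show ?case by (intro exI[of _ "\<lambda>j. Suc (idx j)"]) simp
next
  case (list_emb_Cons2 x y xs ys)
  then obtain idx where mono: "\<forall>j l. j < l \<and> l < length xs \<longrightarrow> idx j < idx l"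
    and emb: "\<forall>j < length xs. idx j < length ys \<and> ys ! idx j = xs ! j"
    by blast
  define idx' where "idx' j = (if j = 0 then 0 else Suc (idx (j - 1)))" for j
  have "idx' j < idx' l" if "j < l" "l < Suc (length xs)" for j l
    using that mono[rule_format, of "j - 1" "l - 1"] by (cases j; cases l) (simp_all add: idx'_def)
  moreover have "idx' j < length (y # ys) \<and> (y # ys) ! idx' j = (x # xs) ! j"
    if "j < Suc (length xs)" for j
    using that emb list_emb_Cons2.hyps(1) by (cases j) (auto simp: idx'_def)
  ultimately show ?case by auto
qed

lemma contains_if_subseq:
  assumes "subseq t s" and "length t = length pat"
    and "\<forall>j l. j < l \<and> l < length pat \<longrightarrow> (t ! j < t ! l \<longleftrightarrow> pat ! j < pat ! l)"
  shows "contains s pat"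
proof -
  obtain idx where "\<forall>j l. j < l \<and> l < length t \<longrightarrow> idx j < idx l"
    and "\<forall>j < length t. idx j < length s \<and> s ! idx j = t ! j"
    using subseq_embedding[OF assms(1)] by blast
  with assms(2,3) show ?thesis
    unfolding contains_def by (intro exI[of _ idx]) auto
qed

lemma contains3_if_subseq:
  assumes "subseq [a, b, c] s"
    and "a < b \<longleftrightarrow> p < q" "a < c \<longleftrightarrow> p < r" "b < c \<longleftrightarrow> q < r"
  shows "contains s [p, q, r]"
proof (rule contains_if_subseq[OF assms(1)], simp, intro allI impI)
  fix j l :: nat assume "j < l \<and> l < length [p, q, r]"
  then have "j < l" "j = 0 \<or> j = 1" "l = 1 \<or> l = 2" by auto
  with assms(2-) show "([a, b, c] ! j < [a, b, c] ! l) = ([p, q, r] ! j < [p, q, r] ! l)"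
    by (elim disjE) simp_all
qed

lemma contains4_if_subseq:
  assumes "subseq [a, b, c, d] s"
    and "a < b \<longleftrightarrow> p < q" "a < c \<longleftrightarrow> p < r" "a < d \<longleftrightarrow> p < t"
    and "b < c \<longleftrightarrow> q < r" "b < d \<longleftrightarrow> q < t" "c < d \<longleftrightarrow> r < t"
  shows "contains s [p, q, r, t]"
proof (rule contains_if_subseq[OF assms(1)], simp, intro allI impI)
  fix j l :: nat assume "j < l \<and> l < length [p, q, r, t]"
  then have "j < l" "j = 0 \<or> j = 1 \<or> j = 2" "l = 1 \<or> l = 2 \<or> l = 3" by auto
  with assms(2-) show "([a, b, c, d] ! j < [a, b, c, d] ! l) = ([p, q, r, t] ! j < [p, q, r, t] ! l)"
    by (elim disjE) simp_all
qed

lemma subseq_Cons_appendI: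
  assumes "a \<in> set u" and "subseq xs v"
  shows "subseq (a # xs) (u @ v)"
proof -
  obtain u1 u2 where "u = u1 @ a # u2"
    using assms(1) by (meson split_list)
  then show ?thesis
    using assms(2) by (simp add: subseq_drop_many)
qed

lemma sorted_pattern_if_contained_in_increasing:
  assumes "sorted_wrt (<) s" and "contains s pat"
  shows "sorted_wrt (<) pat"
proof -
  obtain idx where "\<forall>j l. j < l \<and> l < length pat \<longrightarrow> idx j < idx l"
    and "\<forall>j < length pat. idx j < length s"
    and "\<forall>j l. j < l \<and> l < length pat \<longrightarrow> (s ! idx j < s ! idx l \<longleftrightarrow> pat ! j < pat ! l)"
    using assms(2) unfolding contains_def by blast
  with assms(1) show ?thesis
    unfolding sorted_wrt_iff_nth_less by (meson less_trans)
qed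

lemma antisorted_butlast_if_contained_in_decreasing_snoc:
  assumes "sorted_wrt (>) xs" and "contains (xs @ [y]) pat"
  shows "sorted_wrt (\<ge>) (butlast pat)"
proof -
  obtain idx where mono: "\<forall>j l. j < l \<and> l < length pat \<longrightarrow> idx j < idx l"
    and bound: "\<forall>j < length pat. idx j < Suc (length xs)"
    and iso: "\<forall>j l. j < l \<and> l < length pat \<longrightarrow>
                 ((xs @ [y]) ! idx j < (xs @ [y]) ! idx l \<longleftrightarrow> pat ! j < pat ! l)"
    using assms(2) unfolding contains_def by auto
  have "pat ! l \<le> pat ! j" if "j < l" "l < length pat - 1" for j l
  proof -
    have "idx l < idx (length pat - 1)"
      using mono that by simp
    moreover have "idx (length pat - 1) < Suc (length xs)"
      using bound that by simp
    ultimately have "idx l < length xs"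
      by linarith
    moreover have "idx j < idx l"
      using mono that by simp
    ultimately have "xs ! idx l < xs ! idx j"
      using assms(1) by (simp add: sorted_wrt_iff_nth_less)
    moreover have "j < l \<and> l < length pat"
      using that by simp
    ultimately have "\<not> pat ! j < pat ! l"
      using iso[rule_format, of j l] \<open>idx j < idx l\<close> \<open>idx l < length xs\<close>
      by (simp add: nth_append)
    then show ?thesis by simp
  qed
  then show ?thesis
    by (simp add: sorted_wrt_iff_nth_less nth_butlast)
qed

lemma sorted_wrt_if_subseq_pairs:
  assumes "distinct xs" and "\<And>a b. subseq [a, b] xs \<Longrightarrow> a \<noteq> b \<Longrightarrow> P a b"
  shows "sorted_wrt P xs"
  using assms
proof (induction xs)
  case (Cons x xs)
  have "P x y" if "y \<in> set xs" for y
    using Cons.prems(1) Cons.prems(2)[of x y] that by (auto simp: subseq_singleton_left)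
  moreover have "sorted_wrt P xs"
  proof (rule Cons.IH)
    show "distinct xs"
      using Cons.prems(1) by simp
    show "P a b" if "subseq [a, b] xs" "a \<noteq> b" for a b
      using Cons.prems(2) list_emb_Cons that by blast
  qed
  ultimately show ?case by simp
qed simp

lemma strictly_sorted_eq_upt:
  assumes "sorted_wrt (<) xs" and "set xs = {m..<n}"
  shows "xs = [m..<n]"
  using assms sorted_list_of_set.idem_if_sorted_distinct[of xs]
  by (simp add: strict_sorted_iff)

lemma length_perms:
  assumes "s \<in> perms n"
  shows "length s = n"
  using assms distinct_card[of s] unfolding perms_def by simp

lemma finite_perms: "finite (perms n)"
proof (rule finite_subset)
  show "perms n \<subseteq> {xs. set xs \<subseteq> {1..n} \<and> length xs = n}"
    using length_perms unfolding perms_def by auto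
qed (simp add: finite_lists_length_eq)

lemma Cons_in_perms_iff:
  assumes "1 \<le> n"
  shows "n # t \<in> perms n \<longleftrightarrow> t \<in> perms (n - 1)"
proof -
  have "{1..n} = insert n {1..n - 1}" "n \<notin> {1..n - 1}"
    using assms by auto
  then show ?thesis
    unfolding perms_def by (auto simp: insert_ident)
qed

lemma Cons2_in_perms_iff:
  assumes "2 \<le> n"
  shows "(n - 1) # n # t \<in> perms n \<longleftrightarrow> t \<in> perms (n - 2)"
proof -
  have "{1..n} = insert (n - 1) (insert n {1..n - 2})" "n \<notin> {1..n - 2}" "n - 1 \<notin> insert n {1..n - 2}"
    using assms by auto
  then show ?thesis
    unfolding perms_def by (auto simp: insert_ident)
qed

lemma less_if_not_top_two:
  assumes "s \<in> perms n" and "z \<in> set s" and "z \<noteq> n - 1" and "z \<noteq> n"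
  shows "z < n - 1"
  using assms unfolding perms_def by auto

lemma perms_1: "perms 1 = {[1]}"
proof -
  have "xs = [1]" if xs: "xs \<in> perms 1" for xs
  proof -
    obtain y where "xs = [y]"
      using length_perms[OF xs] by (metis One_nat_def length_0_conv length_Suc_conv)
    then show ?thesis
      using xs unfolding perms_def by auto
  qed
  then show ?thesis
    unfolding perms_def by auto
qed

lemma perms_2: "perms 2 = {[1, 2], [2, 1]}"
proof -
  have "xs = [1, 2] \<or> xs = [2, 1]" if perm: "xs \<in> perms 2" for xs
  proof -
    obtain y z where xs: "xs = [y, z]"
      using length_perms[OF perm] by (metis length_0_conv length_Suc_conv numeral_2_eq_2)
    have "{1..2} = {1, 2::nat}"
      by auto
    then have "{y, z} = {1, 2}" "y \<noteq> z"
      using perm unfolding xs perms_def by simp_all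
    then show ?thesis
      unfolding xs by (auto simp: doubleton_eq_iff)
  qed
  then show ?thesis
    unfolding perms_def by auto
qed

lemma in_Av_iff: "s \<in> Av n P \<longleftrightarrow> s \<in> perms n \<and> (\<forall>p \<in> set P. \<not> contains s p)"
  unfolding Av_def avoids_def by blast

lemma finite_Av: "finite (Av n P)"
  using finite_perms by (rule finite_subset[rotated]) (auto simp: in_Av_iff)

lemma Av_eq_perms_if_short:
  assumes "n < 3" and "\<forall>p \<in> set P. 2 < length p"
  shows "Av n P = perms n"
  using assms contains_length_le length_perms by (fastforce simp: in_Av_iff)

lemma Cons_in_Av_iff:
  assumes "1 \<le> n" and pats: "\<forall>p \<in> set P. 2 < length p \<and> p ! 0 < p ! 2"
  shows "n # t \<in> Av n P \<longleftrightarrow> t \<in> Av (n - 1) P"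
proof -
  have "contains (n # t) p \<longleftrightarrow> contains t p" if "t \<in> perms (n - 1)" "p \<in> set P" for p
  proof
    have "set (tl t) \<subseteq> set t"
      by (cases t) auto
    moreover have "\<forall>z \<in> set t. z < n"
      using that(1) assms(1) unfolding perms_def by auto
    ultimately have "\<forall>z \<in> set (tl t). z < n"
      by fastforce
    moreover have "2 < length p" "p ! 0 < p ! 2"
      using pats that(2) by auto
    ultimately show "contains (n # t) p \<Longrightarrow> contains t p"
      using contains_Cons_aboveD by blast
  qed (rule contains_Cons)
  with Cons_in_perms_iff[OF assms(1)] show ?thesis
    unfolding in_Av_iff by blast
qed

lemma Cons2_in_Av_iff:
  assumes "2 \<le> n" and pats: "\<forall>p \<in> set P. 2 < length p \<and> p ! 0 < p ! 2"
  shows "(n - 1) # n # t \<in> Av n P \<longleftrightarrow> t \<in> Av (n - 2) P"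
proof -
  have "contains ((n - 1) # n # t) p \<longleftrightarrow> contains t p" if "t \<in> perms (n - 2)" "p \<in> set P" for p
  proof
    have "\<forall>z \<in> set t. z < n - 1"
      using that(1) assms(1) unfolding perms_def by auto
    moreover have "set (tl t) \<subseteq> set t"
      by (cases t) auto
    ultimately have "\<forall>z \<in> set (tl (n # t)). z < n - 1" "\<forall>z \<in> set (tl t). z < n"
      by fastforce+
    moreover have "2 < length p" "p ! 0 < p ! 2"
      using pats that(2) by auto
    ultimately show "contains ((n - 1) # n # t) p \<Longrightarrow> contains t p"
      using contains_Cons_aboveD by blast
  qed (intro contains_Cons)
  with Cons2_in_perms_iff[OF assms(1)] show ?thesis
    unfolding in_Av_iff by blast
qed

section \<open>Classes obeying the recurrence a(n) = a(n-1) + a(n-2) + 1\<close>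

lemma Av_decomposition:
  assumes pats: "\<forall>p \<in> set P. 2 < length p \<and> p ! 0 < p ! 2" and "3 \<le> n"
    and sp: "sp \<in> Av n P"
    and rest: "\<And>s. s \<in> Av n P \<Longrightarrow> hd s \<noteq> n \<Longrightarrow> take 2 s \<noteq> [n - 1, n] \<Longrightarrow> s = sp"
  shows "Av n P = Cons n ` Av (n - 1) P \<union> (\<lambda>t. (n - 1) # n # t) ` Av (n - 2) P \<union> {sp}"
proof (intro equalityI subsetI)
  fix s assume s: "s \<in> Av n P"
  then have "length s = n"
    by (simp add: in_Av_iff length_perms)
  then obtain x xs where s_eq: "s = x # xs"
    using \<open>3 \<le> n\<close> by (cases s) auto
  consider "hd s = n" | "take 2 s = [n - 1, n]" | "hd s \<noteq> n" "take 2 s \<noteq> [n - 1, n]"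
    by blast
  then show "s \<in> Cons n ` Av (n - 1) P \<union> (\<lambda>t. (n - 1) # n # t) ` Av (n - 2) P \<union> {sp}"
  proof cases
    case 1
    then show ?thesis
      using s Cons_in_Av_iff[OF _ pats, of n xs] \<open>3 \<le> n\<close> unfolding s_eq by auto
  next
    case 2
    then have s_eq2: "s = (n - 1) # n # drop 2 s"
      by (metis append_Cons append_Nil append_take_drop_id)
    with s have "drop 2 s \<in> Av (n - 2) P"
      using Cons2_in_Av_iff[OF _ pats, of n "drop 2 s"] \<open>3 \<le> n\<close> by simp
    with s_eq2 show ?thesis
      by blast
  next
    case 3
    then show ?thesis
      using rest s by blast
  qed
next
  fix s assume "s \<in> Cons n ` Av (n - 1) P \<union> (\<lambda>t. (n - 1) # n # t) ` Av (n - 2) P \<union> {sp}"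
  then show "s \<in> Av n P"
    using Cons_in_Av_iff[OF _ pats] Cons2_in_Av_iff[OF _ pats] sp \<open>3 \<le> n\<close> by auto
qed

lemma card_Av_recurrence:
  assumes pats: "\<forall>p \<in> set P. 2 < length p \<and> p ! 0 < p ! 2" and "3 \<le> n"
    and sp: "sp \<in> Av n P" "hd sp \<noteq> n" "take 2 sp \<noteq> [n - 1, n]"
    and rest: "\<And>s. s \<in> Av n P \<Longrightarrow> hd s \<noteq> n \<Longrightarrow> take 2 s \<noteq> [n - 1, n] \<Longrightarrow> s = sp"
  shows "card (Av n P) = card (Av (n - 1) P) + card (Av (n - 2) P) + 1"
proof -
  let ?A = "Cons n ` Av (n - 1) P" and ?B = "(\<lambda>t. (n - 1) # n # t) ` Av (n - 2) P"
  have "n - 1 \<noteq> n"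
    using \<open>3 \<le> n\<close> by simp
  then have "?A \<inter> ?B = {}" and "sp \<notin> ?A \<union> ?B"
    using sp(2,3) by auto
  moreover have "card ?A = card (Av (n - 1) P)" "card ?B = card (Av (n - 2) P)"
    by (auto intro: card_image simp: inj_on_def)
  moreover have "Av n P = ?A \<union> ?B \<union> {sp}"
    using Av_decomposition[OF pats \<open>3 \<le> n\<close> sp(1) rest] by blast
  ultimately show ?thesis
    by (simp add: finite_Av card_Un_disjoint)
qed

lemma fib_eq_if_recurrence:
  fixes a :: "nat \<Rightarrow> nat"
  assumes "a 1 = 1" and "a 2 = 2" and rec: "\<And>n. 3 \<le> n \<Longrightarrow> a n = a (n - 1) + a (n - 2) + 1"
    and "1 \<le> n"
  shows "a n + 1 = fib (n + 2)"
  using \<open>1 \<le> n\<close>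
proof (induction n rule: fib.induct)
  case (3 n)
  show ?case
  proof (cases n)
    case 0
    then show ?thesis
      using assms(2) by (simp add: numeral_eq_Suc)
  next
    case (Suc m)
    then have "a (Suc (Suc n)) = a (Suc n) + a n + 1"
      using rec[of "Suc (Suc n)"] by simp
    then show ?thesis
      using "3.IH" Suc by simp
  qed
qed (use assms(1) in \<open>simp_all add: numeral_eq_Suc\<close>)

lemma card_Av_eq_fib:
  assumes pats: "\<forall>p \<in> set P. 2 < length p \<and> p ! 0 < p ! 2"
    and sp: "\<And>n. 3 \<le> n \<Longrightarrow> sp n \<in> Av n P" "\<And>n. 3 \<le> n \<Longrightarrow> hd (sp n) \<noteq> n"
      "\<And>n. 3 \<le> n \<Longrightarrow> take 2 (sp n) \<noteq> [n - 1, n]"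
    and rest: "\<And>n s. 3 \<le> n \<Longrightarrow> s \<in> Av n P \<Longrightarrow> hd s \<noteq> n \<Longrightarrow> take 2 s \<noteq> [n - 1, n] \<Longrightarrow> s = sp n"
    and "1 \<le> n"
  shows "card (Av n P) + 1 = fib (n + 2)"
proof (rule fib_eq_if_recurrence[where a = "\<lambda>n. card (Av n P)"])
  have "\<forall>p \<in> set P. 2 < length p"
    using pats by blast
  then have "Av 1 P = {[1]}" "Av 2 P = {[1, 2], [2, 1]}"
    using Av_eq_perms_if_short[of 1 P] Av_eq_perms_if_short[of 2 P]
    unfolding perms_1 perms_2 by simp_all
  then show "card (Av 1 P) = 1" "card (Av 2 P) = 2"
    by simp_all
qed (use card_Av_recurrence[OF pats _ sp rest] \<open>1 \<le> n\<close> in auto)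

section \<open>The class Av(123, 132, 3241)\<close>

definition reverse_then_max :: "nat \<Rightarrow> nat list" where
  "reverse_then_max n = rev [1..<n] @ [n]"

lemma reverse_then_max_in_Av:
  assumes "1 \<le> n"
  shows "reverse_then_max n \<in> Av n [[1, 2, 3], [1, 3, 2], [3, 2, 4, 1]]"
proof -
  have "reverse_then_max n \<in> perms n"
    using assms unfolding reverse_then_max_def perms_def by auto
  moreover have "\<not> contains (rev [1..<n] @ [n]) p" if "\<not> sorted_wrt (\<ge>) (butlast p)" for p
    using antisorted_butlast_if_contained_in_decreasing_snoc[of "rev [1..<n]" n p] that
    by (auto simp: sorted_wrt_rev)
  ultimately show ?thesis
    unfolding in_Av_iff reverse_then_max_def by auto
qed

lemma hd_ge_if_avoids_123_132:
  assumes "x # xs \<in> perms n" and "\<not> contains (x # xs) [1, 2, 3]" and "\<not> contains (x # xs) [1, 3, 2]"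
  shows "n - 1 \<le> x"
proof (rule ccontr)
  assume small: "\<not> n - 1 \<le> x"
  have "n - 1 \<in> set (x # xs)" "n \<in> set (x # xs)"
    using assms(1) small unfolding perms_def by auto
  with small have "n - 1 \<in> set xs" "n \<in> set xs"
    by auto
  obtain u v where xs: "xs = u @ n # v"
    using \<open>n \<in> set xs\<close> by (meson split_list)
  moreover have "n - 1 \<noteq> n"
    using small by arith
  ultimately have "n - 1 \<in> set u \<or> n - 1 \<in> set v"
    using \<open>n - 1 \<in> set xs\<close> by auto
  then show False
  proof (elim disjE)
    assume "n - 1 \<in> set u"
    then have "subseq [x, n - 1, n] (x # xs)"
      unfolding xs by (intro subseq_Cons2 subseq_Cons_appendI) auto
    then have "contains (x # xs) [1, 2, 3]"
      by (rule contains3_if_subseq) (use small in auto)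
    with assms(2) show False ..
  next
    assume "n - 1 \<in> set v"
    then have "subseq [x, n, n - 1] (x # xs)"
      unfolding xs by (intro subseq_Cons2 subseq_drop_many) (simp add: subseq_singleton_left)
    then have "contains (x # xs) [1, 3, 2]"
      by (rule contains3_if_subseq) (use small in auto)
    with assms(3) show False ..
  qed
qed

lemma nothing_after_max_if_avoids_132_3241:
  assumes perm: "(n - 1) # zs @ n # ws \<in> perms n" (is "?s \<in> _") and "zs \<noteq> []"
    and "\<not> contains ((n - 1) # zs @ n # ws) [1, 3, 2]"
    and "\<not> contains ((n - 1) # zs @ n # ws) [3, 2, 4, 1]"
  shows "ws = []"
proof (rule ccontr)
  assume "ws \<noteq> []"
  then obtain w where w: "w \<in> set ws"
    by fastforce
  obtain z where z: "z \<in> set zs"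
    using assms(2) by fastforce
  have "distinct ?s"
    using perm unfolding perms_def by simp
  then have "z \<noteq> w" "z < n - 1" "w < n - 1"
    using z w less_if_not_top_two[OF perm] by auto
  then consider "z < w" | "w < z"
    by linarith
  then show False
  proof cases
    case 1
    have "subseq [z, n, w] ?s"
      using z w by (intro list_emb_Cons subseq_Cons_appendI subseq_Cons2) (simp_all add: subseq_singleton_left)
    then have "contains ?s [1, 3, 2]"
      by (rule contains3_if_subseq) (use 1 \<open>w < n - 1\<close> in auto)
    with assms(3) show False ..
  next
    case 2
    have "subseq [n - 1, z, n, w] ?s"
      using z w by (intro subseq_Cons2 subseq_Cons_appendI) (simp_all add: subseq_singleton_left)
    then have "contains ?s [3, 2, 4, 1]"
      by (rule contains4_if_subseq) (use 2 \<open>z < n - 1\<close> \<open>w < n - 1\<close> in auto)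
    with assms(4) show False ..
  qed
qed

lemma decreasing_before_max_if_avoids_123:
  assumes "distinct zs" and "\<forall>z \<in> set zs. z < m" and "\<not> contains (us @ zs @ m # ws) [1, 2, 3]"
  shows "sorted_wrt (>) zs"
proof (rule sorted_wrt_if_subseq_pairs[OF assms(1)])
  fix a b assume ab: "subseq [a, b] zs" "a \<noteq> b"
  have "a \<in> set zs" "b \<in> set zs"
    using list_emb_set[OF ab(1), of a] list_emb_set[OF ab(1), of b] by auto
  then have "a < m" "b < m"
    using assms(2) by auto
  have "subseq [a, b, m] (zs @ m # ws)"
    using list_emb_append_mono[OF ab(1), of "[m]" "m # ws"] by (simp add: subseq_singleton_left)
  then have "subseq [a, b, m] (us @ zs @ m # ws)"
    by (rule subseq_drop_many)
  then have "\<not> a < b"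
    using assms(3) contains3_if_subseq[of a b m _ 1 2 3] \<open>a < m\<close> \<open>b < m\<close> by auto
  with ab(2) show "b < a"
    by simp
qed

lemma reverse_then_max_Suc:
  assumes "1 \<le> k"
  shows "reverse_then_max (Suc k) = k # rev [1..<k] @ [Suc k]"
  using assms by (simp add: reverse_then_max_def)

lemma eq_reverse_then_max_if_avoids_123_132_3241:
  assumes "(n - 1) # zs @ n # ws \<in> Av n [[1, 2, 3], [1, 3, 2], [3, 2, 4, 1]]" (is "?s \<in> _")
    and "zs \<noteq> []"
  shows "?s = reverse_then_max n"
proof -
  have perm: "?s \<in> perms n" and no123: "\<not> contains ?s [1, 2, 3]"
    and no132: "\<not> contains ?s [1, 3, 2]" and no3241: "\<not> contains ?s [3, 2, 4, 1]"
    using assms(1) by (auto simp: in_Av_iff)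
  have ws: "ws = []"
    using nothing_after_max_if_avoids_132_3241[OF perm assms(2) no132 no3241] .
  have dist: "distinct ?s" and set_s: "set ?s = {1..n}"
    using perm unfolding perms_def by auto
  have "\<forall>z \<in> set zs. z < n"
  proof
    fix z assume "z \<in> set zs"
    with dist have "z \<noteq> n - 1" "z \<noteq> n"
      by auto
    with \<open>z \<in> set zs\<close> show "z < n"
      using less_if_not_top_two[OF perm, of z] by simp
  qed
  then have "sorted_wrt (>) zs"
    using dist no123 decreasing_before_max_if_avoids_123[of zs n "[n - 1]" ws] by simp
  moreover have "set zs = {1..<n - 1}"
  proof -
    have "insert (n - 1) (insert n (set zs)) = {1..n}" "n - 1 \<notin> set zs" "n \<notin> set zs"
      using set_s dist unfolding ws by auto
    then have "set zs = {1..n} - {n - 1, n}"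
      by blast
    also have "\<dots> = {1..<n - 1}"
      by auto
    finally show ?thesis .
  qed
  ultimately have "rev zs = [1..<n - 1]"
    by (intro strictly_sorted_eq_upt) (simp_all add: sorted_wrt_rev)
  then have "zs = rev [1..<n - 1]"
    by (metis rev_rev_ident)
  moreover have "2 \<le> n"
    using \<open>set zs = {1..<n - 1}\<close> assms(2) by (cases zs) auto
  ultimately show ?thesis
    unfolding ws using reverse_then_max_Suc[of "n - 1"] by simp
qed

lemma Av_123_132_3241_otherwise:
  assumes "3 \<le> n" and s: "s \<in> Av n [[1, 2, 3], [1, 3, 2], [3, 2, 4, 1]]"
    and "hd s \<noteq> n" and "take 2 s \<noteq> [n - 1, n]"
  shows "s = reverse_then_max n"
proof -
  have perm: "s \<in> perms n"
    using s by (simp add: in_Av_iff)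
  then obtain x xs where s_eq: "s = x # xs"
    using \<open>3 \<le> n\<close> length_perms[OF perm] by (cases s) auto
  have "n - 1 \<le> x" "x \<le> n"
    using hd_ge_if_avoids_123_132[of x xs n] s perm unfolding s_eq by (auto simp: in_Av_iff perms_def)
  with \<open>hd s \<noteq> n\<close> have x: "x = n - 1"
    unfolding s_eq by simp
  have "n \<in> set (x # xs)"
    using perm \<open>3 \<le> n\<close> unfolding s_eq perms_def by auto
  with \<open>3 \<le> n\<close> x obtain zs ws where xs: "xs = zs @ n # ws"
    by (auto dest: split_list)
  moreover have "zs \<noteq> []"
    using \<open>take 2 s \<noteq> [n - 1, n]\<close> unfolding s_eq x xs by auto
  ultimately show ?thesis
    using eq_reverse_then_max_if_avoids_123_132_3241 s unfolding s_eq x by blast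
qed

section \<open>The class Av(132, 213, 2341)\<close>

lemma hd_eq_max_if_avoids_213:
  assumes perm: "(n - 1) # xs \<in> perms n" and "\<not> contains ((n - 1) # xs) [2, 1, 3]" and "2 \<le> n"
  shows "hd xs = n"
proof (rule ccontr)
  assume "hd xs \<noteq> n"
  have "n \<in> set ((n - 1) # xs)"
    using perm \<open>2 \<le> n\<close> unfolding perms_def by auto
  with \<open>2 \<le> n\<close> obtain y ys where xs: "xs = y # ys"
    by (cases xs) auto
  with \<open>hd xs \<noteq> n\<close> \<open>n \<in> set ((n - 1) # xs)\<close> \<open>2 \<le> n\<close> have "n \<in> set ys" "y \<noteq> n"
    by auto
  moreover have "y \<noteq> n - 1"
    using perm unfolding xs perms_def by auto
  ultimately have "y < n - 1"
    using less_if_not_top_two[OF perm] unfolding xs by simp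
  have "subseq [n - 1, y, n] ((n - 1) # xs)"
    using \<open>n \<in> set ys\<close> unfolding xs by (simp add: subseq_singleton_left)
  then have "contains ((n - 1) # xs) [2, 1, 3]"
    by (rule contains3_if_subseq) (use \<open>y < n - 1\<close> in auto)
  with assms(2) show False ..
qed

lemma eq_upt_if_hd_1_avoids_132:
  assumes "1 # xs \<in> perms n" and "\<not> contains (1 # xs) [1, 3, 2]"
  shows "1 # xs = [1..<n + 1]"
proof -
  have dist: "distinct (1 # xs)" and set_s: "set (1 # xs) = {1..n}"
    using assms(1) unfolding perms_def by auto
  have set_xs: "set xs = {2..<n + 1}"
  proof -
    have "set xs = set (1 # xs) - {1}"
      using dist by auto
    also have "\<dots> = {2..<n + 1}"
      unfolding set_s by auto
    finally show ?thesis .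
  qed
  have "sorted_wrt (<) xs"
  proof (rule sorted_wrt_if_subseq_pairs)
    show "distinct xs"
      using dist by simp
    fix a b assume ab: "subseq [a, b] xs" "a \<noteq> b"
    have "a \<in> set xs" "b \<in> set xs"
      using list_emb_set[OF ab(1), of a] list_emb_set[OF ab(1), of b] by auto
    then have "1 < a" "1 < b"
      unfolding set_xs by auto
    have "subseq [1, a, b] (1 # xs)"
      using ab(1) by simp
    then have "\<not> b < a"
      using assms(2) contains3_if_subseq[of 1 a b "1 # xs" 1 3 2] \<open>1 < a\<close> \<open>1 < b\<close> by auto
    with ab(2) show "a < b"
      by simp
  qed
  then have "xs = [2..<n + 1]"
    using set_xs by (rule strictly_sorted_eq_upt)
  moreover have "1 \<in> {1..n}"
    unfolding set_s[symmetric] by simp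
  then have "[1..<n + 1] = 1 # [2..<n + 1]"
    using upt_conv_Cons[of 1 "n + 1"] by (simp add: numeral_2_eq_2 del: upt_Suc)
  ultimately show ?thesis
    by simp
qed

lemma hd_not_between_if_avoids_132_213_2341:
  assumes "x # xs \<in> perms n" and "1 < x" and "x < n - 1"
    and "\<not> contains (x # xs) [1, 3, 2]" and "\<not> contains (x # xs) [2, 1, 3]"
    and "\<not> contains (x # xs) [2, 3, 4, 1]"
  shows False
proof -
  have "1 \<in> set (x # xs)" "n - 1 \<in> set (x # xs)" "n \<in> set (x # xs)"
    using assms(1-3) unfolding perms_def by auto
  with assms(2,3) have "1 \<in> set xs" "n - 1 \<in> set xs" "n \<in> set xs"
    by auto
  then obtain u v where xs: "xs = u @ n # v"
    by (meson split_list)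
  have "n - 1 \<in> set u"
  proof (rule ccontr)
    assume "n - 1 \<notin> set u"
    then have "n - 1 \<in> set v"
      using \<open>n - 1 \<in> set xs\<close> assms(3) unfolding xs by auto
    then have "subseq [x, n, n - 1] (x # xs)"
      unfolding xs by (intro subseq_Cons2 subseq_drop_many) (simp add: subseq_singleton_left)
    then have "contains (x # xs) [1, 3, 2]"
      by (rule contains3_if_subseq) (use assms(3) in auto)
    with assms(4) show False ..
  qed
  have "1 \<in> set v"
  proof (rule ccontr)
    assume "1 \<notin> set v"
    then have "1 \<in> set u"
      using \<open>1 \<in> set xs\<close> assms(2,3) unfolding xs by auto
    then have "subseq [x, 1, n] (x # xs)"
      unfolding xs by (intro subseq_Cons2 subseq_Cons_appendI) auto
    then have "contains (x # xs) [2, 1, 3]"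
      by (rule contains3_if_subseq) (use assms(2,3) in auto)
    with assms(5) show False ..
  qed
  have "subseq [x, n - 1, n, 1] (x # xs)"
    unfolding xs using \<open>n - 1 \<in> set u\<close> \<open>1 \<in> set v\<close>
    by (intro subseq_Cons2 subseq_Cons_appendI) (simp_all add: subseq_singleton_left)
  then have "contains (x # xs) [2, 3, 4, 1]"
    by (rule contains4_if_subseq) (use assms(2,3) in auto)
  with assms(6) show False ..
qed

lemma Av_132_213_2341_otherwise:
  assumes "3 \<le> n" and s: "s \<in> Av n [[1, 3, 2], [2, 1, 3], [2, 3, 4, 1]]"
    and "hd s \<noteq> n" and "take 2 s \<noteq> [n - 1, n]"
  shows "s = [1..<n + 1]"
proof -
  have perm: "s \<in> perms n" and avoids: "\<not> contains s [1, 3, 2]" "\<not> contains s [2, 1, 3]"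
    "\<not> contains s [2, 3, 4, 1]"
    using s by (simp_all add: in_Av_iff)
  then obtain x xs where s_eq: "s = x # xs"
    using \<open>3 \<le> n\<close> length_perms[OF perm] by (cases s) auto
  have "x \<in> set s"
    unfolding s_eq by simp
  then have "1 \<le> x" "x \<le> n"
    using perm unfolding perms_def by auto
  with \<open>hd s \<noteq> n\<close> consider "x = n - 1" | "x = 1" | "1 < x" "x < n - 1"
    unfolding s_eq by fastforce
  then show ?thesis
  proof cases
    case 1
    then have "hd xs = n"
      using hd_eq_max_if_avoids_213[of n xs] perm avoids(2) \<open>3 \<le> n\<close>
      unfolding s_eq by simp
    moreover have "xs \<noteq> []"
      using length_perms[OF perm] \<open>3 \<le> n\<close> unfolding s_eq by auto
    ultimately have "take 2 s = [n - 1, n]"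
      unfolding s_eq 1 by (cases xs) auto
    with \<open>take 2 s \<noteq> [n - 1, n]\<close> show ?thesis ..
  next
    case 2
    then show ?thesis
      using eq_upt_if_hd_1_avoids_132[of xs n] perm avoids(1) unfolding s_eq by simp
  next
    case 3
    then show ?thesis
      using hd_not_between_if_avoids_132_213_2341[of x xs n] perm avoids unfolding s_eq by simp
  qed
qed

lemma card_Av_123_132_3241:
  assumes "1 \<le> n"
  shows "card (Av n [[1, 2, 3], [1, 3, 2], [3, 2, 4, 1]]) + 1 = fib (n + 2)"
proof (rule card_Av_eq_fib[where sp = reverse_then_max])
  fix m :: nat assume "3 \<le> m"
  define k where "k = m - 2"
  with \<open>3 \<le> m\<close> have "m = Suc (Suc k)" "1 \<le> k"
    by auto
  then show "hd (reverse_then_max m) \<noteq> m" "take 2 (reverse_then_max m) \<noteq> [m - 1, m]"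
    by (simp_all add: reverse_then_max_def)
qed (use reverse_then_max_in_Av Av_123_132_3241_otherwise assms in auto)

lemma card_Av_132_213_2341:
  assumes "1 \<le> n"
  shows "card (Av n [[1, 3, 2], [2, 1, 3], [2, 3, 4, 1]]) + 1 = fib (n + 2)"
proof (rule card_Av_eq_fib[where sp = "\<lambda>m. [1..<m + 1]"])
  fix m :: nat assume "3 \<le> m"
  have "\<not> contains [1..<m + 1] p" if "\<not> sorted_wrt (<) p" for p
    using sorted_pattern_if_contained_in_increasing[OF sorted_wrt_upt] that by blast
  then show "[1..<m + 1] \<in> Av m [[1, 3, 2], [2, 1, 3], [2, 3, 4, 1]]"
    by (auto simp: in_Av_iff perms_def)
  show "hd [1..<m + 1] \<noteq> m" "take 2 [1..<m + 1] \<noteq> [m - 1, m]"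
    using \<open>3 \<le> m\<close> by (simp_all add: upt_conv_Cons)
qed (use Av_132_213_2341_otherwise assms in auto)

theorem theorem3p4:
  fixes n :: nat
  assumes "n \<ge> 1"
  shows "card (Av n [[1,2,3],[1,3,2],[3,2,4,1]]) = fib (n + 2) - 1
       \<and> card (Av n [[1,3,2],[2,1,3],[2,3,4,1]]) = fib (n + 2) - 1"
  using card_Av_123_132_3241[OF assms] card_Av_132_213_2341[OF assms] by (metis add_diff_cancel_right')

end
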